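(* For each positive integer $k$, there exists a finite digraph $D$ with stability number $k$ such that for any $k-1$ directed paths $P_1,\ldots,P_{k-1}$ in $D$, the digraph obtained from $D$ by deleting all vertices of $P_1\cup\cdots\cup P_{k-1}$ has stability number $k$.
   Context: The stability number of a digraph is the maximum size of a set of vertices no two of which are joined by an edge (in either direction). A directed path is a sequence of distinct vertices $v_1,\ldots,v_m$ ($m\ge 1$) with an edge from $v_i$ to $v_{i+1}$ for each $i$. *)

theory Defs
  imports Main
begin

definition digraph :: "'a set \<Rightarrow> ('a \<times> 'a) set \<Rightarrow> bool" where
  "digraph V E \<longleftrightarrow> finite V \<and> E \<subseteq> V \<times> V \<and> (\<forall>v. (v, v) \<notin> E)"

definition stable_set :: "'a set \<Rightarrow> ('a \<times> 'a) set \<Rightarrow> 'a set \<Rightarrow> bool" where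
  "stable_set V E S \<longleftrightarrow> S \<subseteq> V \<and>
     (\<forall>x\<in>S. \<forall>y\<in>S. x \<noteq> y \<longrightarrow> (x, y) \<notin> E \<and> (y, x) \<notin> E)"

definition stability_number :: "'a set \<Rightarrow> ('a \<times> 'a) set \<Rightarrow> nat" where
  "stability_number V E = Max {card S | S. stable_set V E S}"

definition dipath :: "'a set \<Rightarrow> ('a \<times> 'a) set \<Rightarrow> 'a list \<Rightarrow> bool" where
  "dipath V E p \<longleftrightarrow> p \<noteq> [] \<and> distinct p \<and> set p \<subseteq> V \<and>
     (\<forall>i. Suc i < length p \<longrightarrow> (p ! i, p ! Suc i) \<in> E)"

definition delete_vertices :: "'a set \<Rightarrow> ('a \<times> 'a) set \<Rightarrow> 'a set \<Rightarrow> 'a set \<times> ('a \<times> 'a) set" where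
  "delete_vertices V E X = (V - X, E \<inter> ((V - X) \<times> (V - X)))"

end

theory Submission
  imports Defs "HOL-Library.Nat_Bijection"
begin

text \<open>Call a digraph robust of order k if its stable sets have at most k vertices, some has exactly k,
and every vertex set meeting all stable sets of size k contains k vertices none of which can be
reached from another. A directed path contains at most one vertex of such an antichain, so k - 1
paths cannot meet every maximum stable set, and one of them survives their deletion.

Robust digraphs of every order arise by substitution into a weighted acyclic gadget on 4b + 1
vertices, in which every stable set has weight at most b and every set meeting all stable sets of
weight b contains an antichain of weight b. Replacing each vertex x of the gadget by a robust digraph
of order w(x), with all arcs from the copy of x to the copy of y whenever xy is an arc of the gadget,
gives a robust digraph of order b: stable sets and antichains of the result are unions of stable
sets, respectively antichains, of the copies over a stable set, respectively antichain, of the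
gadget.\<close>

section \<open>Robust digraphs\<close>

definition antichain :: "('a \<times> 'a) set \<Rightarrow> 'a set \<Rightarrow> bool" where
  "antichain E A \<longleftrightarrow> (\<forall>u\<in>A. \<forall>v\<in>A. u \<noteq> v \<longrightarrow> (u, v) \<notin> E\<^sup>+)"

definition robust :: "'a set \<Rightarrow> ('a \<times> 'a) set \<Rightarrow> ('a \<Rightarrow> nat) \<Rightarrow> nat \<Rightarrow> bool" where
  "robust V E w k \<longleftrightarrow> digraph V E \<and>
     (\<forall>S. stable_set V E S \<longrightarrow> sum w S \<le> k) \<and> (\<exists>S. stable_set V E S \<and> sum w S = k) \<and>
     (\<forall>B\<subseteq>V. (\<forall>S. stable_set V E S \<and> sum w S = k \<longrightarrow> B \<inter> S \<noteq> {}) \<longrightarrow>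
        (\<exists>A\<subseteq>B. antichain E A \<and> sum w A = k))"

lemma robustD:
  assumes "robust V E w k"
  shows "digraph V E" and "\<And>S. stable_set V E S \<Longrightarrow> sum w S \<le> k"
    and "\<exists>S. stable_set V E S \<and> sum w S = k"
    and "\<And>B. B \<subseteq> V \<Longrightarrow> (\<And>S. stable_set V E S \<Longrightarrow> sum w S = k \<Longrightarrow> B \<inter> S \<noteq> {}) \<Longrightarrow>
           \<exists>A\<subseteq>B. antichain E A \<and> sum w A = k"
  using assms unfolding robust_def by blast+

lemma robust_unitD:
  assumes "robust V E (\<lambda>_. 1) k"
  shows "\<And>S. stable_set V E S \<Longrightarrow> card S \<le> k"
    and "\<exists>S. stable_set V E S \<and> card S = k"
    and "\<And>B. B \<subseteq> V \<Longrightarrow> (\<And>S. stable_set V E S \<Longrightarrow> card S = k \<Longrightarrow> B \<inter> S \<noteq> {}) \<Longrightarrow>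
           \<exists>A\<subseteq>B. antichain E A \<and> card A = k"
  using robustD(2-4)[OF assms] by simp_all

lemma stable_set_subset: "stable_set V E S \<Longrightarrow> S \<subseteq> V"
  unfolding stable_set_def by blast

lemma antichain_pair: "(u, v) \<notin> E\<^sup>+ \<Longrightarrow> (v, u) \<notin> E\<^sup>+ \<Longrightarrow> antichain E {u, v}"
  unfolding antichain_def by auto

lemma dipath_trancl:
  assumes "dipath V E p" "i < j" "j < length p"
  shows "(p ! i, p ! j) \<in> E\<^sup>+"
  using assms(2,3)
proof (induction j)
  case (Suc j)
  have "(p ! j, p ! Suc j) \<in> E"
    using assms(1) Suc.prems unfolding dipath_def by blast
  then show ?case
    using Suc by (cases "i = j") (auto intro: trancl_into_trancl)
qed simp

lemma card_antichain_Int_dipath: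
  assumes "antichain E A" "dipath V E p"
  shows "card (A \<inter> set p) \<le> 1"
proof -
  have same: "p ! i = p ! j" if "p ! i \<in> A" "p ! j \<in> A" "i < j" "j < length p" for i j
    using that assms(1) dipath_trancl[OF assms(2)] unfolding antichain_def by blast
  have "a = a'" if a: "a \<in> A \<inter> set p" and a': "a' \<in> A \<inter> set p" for a a'
  proof -
    obtain i where "i < length p" "p ! i = a"
      using a by (auto simp: in_set_conv_nth)
    moreover obtain j where "j < length p" "p ! j = a'"
      using a' by (auto simp: in_set_conv_nth)
    ultimately show ?thesis
      using a a' same[of i j] same[of j i] by (cases i j rule: linorder_cases) auto
  qed
  then show ?thesis
    by (simp add: card_le_Suc0_iff_eq)
qed

lemma card_antichain_le_dipaths:
  assumes "antichain E A" "\<forall>p\<in>set ps. dipath V E p" "A \<subseteq> (\<Union>p\<in>set ps. set p)"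
  shows "card A \<le> length ps"
proof -
  have "card A = card (\<Union>p\<in>set ps. A \<inter> set p)"
    using assms(3) by (intro arg_cong[where f = card]) blast
  also have "\<dots> \<le> (\<Sum>p\<in>set ps. card (A \<inter> set p))"
    by (rule card_UN_le) simp
  also have "\<dots> \<le> (\<Sum>p\<in>set ps. 1)"
    using assms(1,2) card_antichain_Int_dipath by (intro sum_mono) blast
  also have "\<dots> \<le> length ps"
    using card_length by simp
  finally show ?thesis .
qed

lemma stability_numberI:
  assumes "finite V" "stable_set V E S" "card S = k" "\<And>T. stable_set V E T \<Longrightarrow> card T \<le> k"
  shows "stability_number V E = k"
  unfolding stability_number_def
proof (rule Max_eqI)
  show "finite {card S |S. stable_set V E S}"
    by (rule finite_subset[of _ "{..k}"]) (use assms(4) in auto)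
qed (use assms in auto)

lemma stable_set_delete_vertices:
  "stable_set (V - X) (E \<inter> (V - X) \<times> (V - X)) S \<longleftrightarrow> stable_set V E S \<and> S \<inter> X = {}"
  unfolding stable_set_def by blast

lemma robust_delete_dipaths:
  assumes robust: "robust V E (\<lambda>_. 1) k" and paths: "\<forall>p\<in>set ps. dipath V E p" "length ps < k"
  defines "X \<equiv> \<Union>p\<in>set ps. set p"
  shows "stability_number (V - X) (E \<inter> (V - X) \<times> (V - X)) = k"
proof -
  have "\<exists>S. stable_set V E S \<and> card S = k \<and> X \<inter> S = {}"
  proof (rule ccontr)
    assume "\<not> ?thesis"
    moreover have "X \<subseteq> V"
      using paths(1) unfolding X_def dipath_def by blast
    ultimately obtain A where A: "A \<subseteq> X" "antichain E A" "card A = k"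
      using robustD(4)[OF robust, of X] by auto
    have "card A \<le> length ps"
      using card_antichain_le_dipaths[OF A(2) paths(1)] A(1) unfolding X_def by blast
    then show False
      using A(3) paths(2) by linarith
  qed
  then obtain S where "stable_set V E S" "card S = k" "S \<inter> X = {}"
    by blast
  moreover have "finite V"
    using robustD(1)[OF robust] unfolding digraph_def by blast
  ultimately show ?thesis
    using robustD(2)[OF robust]
    by (intro stability_numberI) (auto simp: stable_set_delete_vertices)
qed

lemma robust_stability_number:
  assumes "robust V E (\<lambda>_. 1) k"
  shows "stability_number V E = k"
proof -
  have "finite V"
    using robustD(1)[OF assms] unfolding digraph_def by blast
  moreover obtain S where "stable_set V E S" "card S = k"
    using robust_unitD(2)[OF assms] by blast
  ultimately show ?thesis
    using robust_unitD(1)[OF assms] by (rule stability_numberI)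
qed

section \<open>Substitution\<close>

text \<open>The copy of vertex v in the digraph substituted for the base vertex x is the number
prod_encode (x, v), so that iterated substitution stays within nat.\<close>

definition outer :: "nat \<Rightarrow> nat" where
  "outer u = fst (prod_decode u)"

definition inner :: "nat \<Rightarrow> nat" where
  "inner u = snd (prod_decode u)"

lemma outer_prod_encode [simp]: "outer (prod_encode (x, v)) = x"
  by (simp add: outer_def)

lemma inner_prod_encode [simp]: "inner (prod_encode (x, v)) = v"
  by (simp add: inner_def)

lemma prod_encode_outer_inner [simp]: "prod_encode (outer u, inner u) = u"
  by (simp add: outer_def inner_def)

lemma outer_inner_eqI:
  assumes "outer a = outer b" "inner a = inner b"
  shows "a = b"
  using prod.expand[of "prod_decode a" "prod_decode b"] assms unfolding outer_def inner_def by simp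

definition subst_vertices :: "nat set \<Rightarrow> (nat \<Rightarrow> nat set) \<Rightarrow> nat set" where
  "subst_vertices I T = prod_encode ` (SIGMA x:I. T x)"

lemma mem_subst_vertices: "u \<in> subst_vertices I T \<longleftrightarrow> outer u \<in> I \<and> inner u \<in> T (outer u)"
proof
  assume "u \<in> subst_vertices I T"
  then obtain x v where "x \<in> I" "v \<in> T x" "u = prod_encode (x, v)"
    unfolding subst_vertices_def by blast
  then show "outer u \<in> I \<and> inner u \<in> T (outer u)"
    by simp
next
  assume "outer u \<in> I \<and> inner u \<in> T (outer u)"
  then have "prod_encode (outer u, inner u) \<in> subst_vertices I T"
    unfolding subst_vertices_def by blast
  then show "u \<in> subst_vertices I T"
    by simp
qed

lemma subst_vertices_decompose:
  "S = subst_vertices (outer ` S) (\<lambda>x. inner ` {u\<in>S. outer u = x})"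
proof (intro set_eqI iffI)
  fix u assume "u \<in> subst_vertices (outer ` S) (\<lambda>x. inner ` {u\<in>S. outer u = x})"
  then have "inner u \<in> inner ` {a\<in>S. outer a = outer u}"
    unfolding mem_subst_vertices by (rule conjunct2)
  then obtain a where "a \<in> S" "outer a = outer u" "inner a = inner u"
    by (auto simp: image_iff)
  then show "u \<in> S"
    using outer_inner_eqI by metis
next
  fix u assume "u \<in> S"
  then show "u \<in> subst_vertices (outer ` S) (\<lambda>x. inner ` {u\<in>S. outer u = x})"
    unfolding mem_subst_vertices by blast
qed

lemma card_subst_vertices:
  assumes "finite I" "\<And>x. x \<in> I \<Longrightarrow> finite (T x)"
  shows "card (subst_vertices I T) = (\<Sum>x\<in>I. card (T x))"
  unfolding subst_vertices_def using assms
  by (subst card_image) (auto intro: inj_on_subset[OF inj_prod_encode])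

definition subst_arcs ::
    "nat set \<Rightarrow> (nat \<times> nat) set \<Rightarrow> (nat \<Rightarrow> nat set) \<Rightarrow> (nat \<Rightarrow> (nat \<times> nat) set) \<Rightarrow> (nat \<times> nat) set"
  where
  "subst_arcs VA EA Vf Ef =
     {(prod_encode (x, v), prod_encode (x, v')) | x v v'. x \<in> VA \<and> (v, v') \<in> Ef x} \<union>
     {(prod_encode (x, v), prod_encode (y, v')) | x y v v'. (x, y) \<in> EA \<and> v \<in> Vf x \<and> v' \<in> Vf y}"

lemma subst_arcsE:
  assumes "(a, b) \<in> subst_arcs VA EA Vf Ef"
  obtains "outer a = outer b" "outer a \<in> VA" "(inner a, inner b) \<in> Ef (outer a)"
    | "(outer a, outer b) \<in> EA" "inner a \<in> Vf (outer a)" "inner b \<in> Vf (outer b)"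
  using assms unfolding subst_arcs_def by auto

lemma subst_arcs_fibreI:
  assumes "outer a = outer b" "outer a \<in> VA" "(inner a, inner b) \<in> Ef (outer a)"
  shows "(a, b) \<in> subst_arcs VA EA Vf Ef"
proof -
  have "(prod_encode (outer a, inner a), prod_encode (outer b, inner b)) \<in> subst_arcs VA EA Vf Ef"
    using assms unfolding subst_arcs_def by force
  then show ?thesis
    by simp
qed

lemma subst_arcs_baseI:
  assumes "(outer a, outer b) \<in> EA" "inner a \<in> Vf (outer a)" "inner b \<in> Vf (outer b)"
  shows "(a, b) \<in> subst_arcs VA EA Vf Ef"
proof -
  have "(prod_encode (outer a, inner a), prod_encode (outer b, inner b)) \<in> subst_arcs VA EA Vf Ef"
    using assms unfolding subst_arcs_def by blast
  then show ?thesis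
    by simp
qed

lemma subst_arcs_trancl:
  assumes "(a, b) \<in> (subst_arcs VA EA Vf Ef)\<^sup>+"
  shows "outer a = outer b \<and> (inner a, inner b) \<in> (Ef (outer a))\<^sup>+ \<or> (outer a, outer b) \<in> EA\<^sup>+"
  using assms
proof (induction rule: trancl_induct)
  case (base b)
  then show ?case
    by (cases rule: subst_arcsE) auto
next
  case (step b c)
  from step(2) show ?case
  proof (cases rule: subst_arcsE)
    case 1
    then show ?thesis
      using step(3) by (auto intro: trancl_into_trancl)
  next
    case 2
    then show ?thesis
      using step(3) by (auto intro: trancl_into_trancl trancl_into_trancl2)
  qed
qed

lemma digraph_subst:
  assumes base: "digraph VA EA" and fibres: "\<And>x. x \<in> VA \<Longrightarrow> digraph (Vf x) (Ef x)"
  shows "digraph (subst_vertices VA Vf) (subst_arcs VA EA Vf Ef)"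
  unfolding digraph_def
proof (intro conjI allI)
  show "finite (subst_vertices VA Vf)"
    using base fibres unfolding digraph_def subst_vertices_def by auto
  show "subst_arcs VA EA Vf Ef \<subseteq> subst_vertices VA Vf \<times> subst_vertices VA Vf"
  proof clarify
    fix a b assume "(a, b) \<in> subst_arcs VA EA Vf Ef"
    then show "a \<in> subst_vertices VA Vf \<and> b \<in> subst_vertices VA Vf"
    proof (cases rule: subst_arcsE)
      case 1
      then show ?thesis
        using fibres unfolding digraph_def mem_subst_vertices by auto
    next
      case 2
      then show ?thesis
        using base unfolding digraph_def mem_subst_vertices by auto
    qed
  qed
  show "(u, u) \<notin> subst_arcs VA EA Vf Ef" for u
    using base fibres unfolding digraph_def by (auto elim: subst_arcsE)
qed

lemma stable_set_subst:
  assumes "digraph VA EA" "stable_set VA EA I" "\<And>x. x \<in> I \<Longrightarrow> stable_set (Vf x) (Ef x) (T x)"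
  shows "stable_set (subst_vertices VA Vf) (subst_arcs VA EA Vf Ef) (subst_vertices I T)"
proof -
  have no_arc: "(a, b) \<notin> subst_arcs VA EA Vf Ef"
    if ab: "a \<in> subst_vertices I T" "b \<in> subst_vertices I T" "a \<noteq> b" for a b
  proof
    assume "(a, b) \<in> subst_arcs VA EA Vf Ef"
    then show False
    proof (cases rule: subst_arcsE)
      case 1
      then have "inner a \<noteq> inner b"
        using ab(3) outer_inner_eqI by blast
      then show False
        using 1 ab(1,2) assms(3) unfolding stable_set_def mem_subst_vertices by auto
    next
      case 2
      then have "outer a \<noteq> outer b"
        using assms(1) unfolding digraph_def by auto
      then show False
        using 2 ab(1,2) assms(2) unfolding stable_set_def mem_subst_vertices by auto
    qed
  qed
  have "subst_vertices I T \<subseteq> subst_vertices VA Vf"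
    using assms(2,3) unfolding stable_set_def mem_subst_vertices subset_iff by auto
  then show ?thesis
    using no_arc unfolding stable_set_def by blast
qed

lemma stable_set_subst_decompose:
  assumes "stable_set (subst_vertices VA Vf) (subst_arcs VA EA Vf Ef) S"
  obtains I T where "S = subst_vertices I T" "stable_set VA EA I"
    "\<And>x. x \<in> I \<Longrightarrow> stable_set (Vf x) (Ef x) (T x)"
proof
  let ?I = "outer ` S" and ?T = "\<lambda>x. inner ` {u\<in>S. outer u = x}"
  have sub: "S \<subseteq> subst_vertices VA Vf"
    using assms unfolding stable_set_def by blast
  have outer: "outer a \<in> VA" and inner: "inner a \<in> Vf (outer a)" if "a \<in> S" for a
    using mem_subst_vertices[of a VA Vf] sub that by blast+
  have no_arc: "(a, b) \<notin> subst_arcs VA EA Vf Ef" if "a \<in> S" "b \<in> S" "a \<noteq> b" for a b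
    using assms that unfolding stable_set_def by blast
  have base: "(outer a, outer b) \<notin> EA" if "a \<in> S" "b \<in> S" "a \<noteq> b" for a b
    using no_arc[OF that] subst_arcs_baseI[of a b EA Vf VA Ef] inner[OF that(1)] inner[OF that(2)]
    by blast
  have fibre: "(inner a, inner b) \<notin> Ef (outer a)"
    if "a \<in> S" "b \<in> S" "a \<noteq> b" "outer a = outer b" for a b
    using no_arc[OF that(1-3)] subst_arcs_fibreI[of a b VA Ef EA Vf] outer[OF that(1)] that(4)
    by blast
  show "S = subst_vertices ?I ?T"
    by (rule subst_vertices_decompose)
  have no_base_arc: "(x, y) \<notin> EA" if xy: "x \<in> ?I" "y \<in> ?I" "x \<noteq> y" for x y
  proof -
    obtain a b where "a \<in> S" "b \<in> S" "x = outer a" "y = outer b"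
      using xy(1,2) by blast
    then show ?thesis
      using base[of a b] xy(3) by auto
  qed
  show "stable_set VA EA ?I"
    unfolding stable_set_def
  proof (intro conjI ballI impI)
    show "?I \<subseteq> VA"
      using outer by blast
  qed (simp_all add: no_base_arc)
  have no_fibre_arc: "(v, v') \<notin> Ef x" if vv: "v \<in> ?T x" "v' \<in> ?T x" "v \<noteq> v'" for x v v'
  proof -
    obtain a b where "a \<in> S" "b \<in> S" "outer a = x" "outer b = x" "v = inner a" "v' = inner b"
      using vv(1,2) by blast
    then show ?thesis
      using fibre[of a b] vv(3) by auto
  qed
  show "stable_set (Vf x) (Ef x) (?T x)" for x
    unfolding stable_set_def
  proof (intro conjI ballI impI)
    show "?T x \<subseteq> Vf x"
      using inner by blast
  qed (simp_all add: no_fibre_arc)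
qed

lemma antichain_subst:
  assumes "acyclic EA" "antichain EA I" "\<And>x. x \<in> I \<Longrightarrow> antichain (Ef x) (T x)"
  shows "antichain (subst_arcs VA EA Vf Ef) (subst_vertices I T)"
  unfolding antichain_def
proof (intro ballI impI notI)
  fix a b assume ab: "a \<in> subst_vertices I T" "b \<in> subst_vertices I T" "a \<noteq> b"
    and "(a, b) \<in> (subst_arcs VA EA Vf Ef)\<^sup>+"
  then consider "outer a = outer b" "(inner a, inner b) \<in> (Ef (outer a))\<^sup>+"
    | "(outer a, outer b) \<in> EA\<^sup>+"
    using subst_arcs_trancl by blast
  then show False
  proof cases
    case 1
    then have "inner a \<noteq> inner b"
      using ab(3) outer_inner_eqI by blast
    then show False
      using 1 ab(1,2) assms(3) unfolding antichain_def mem_subst_vertices by auto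
  next
    case 2
    then have "outer a \<noteq> outer b"
      using assms(1) unfolding acyclic_def by auto
    then show False
      using 2 ab(1,2) assms(2) unfolding antichain_def mem_subst_vertices by auto
  qed
qed

locale robust_substitution =
  fixes VA :: "nat set" and EA :: "(nat \<times> nat) set" and w :: "nat \<Rightarrow> nat" and k :: nat
    and Vf :: "nat \<Rightarrow> nat set" and Ef :: "nat \<Rightarrow> (nat \<times> nat) set"
  assumes base_acyclic: "acyclic EA" and base: "robust VA EA w k"
    and fibres: "\<And>x. x \<in> VA \<Longrightarrow> robust (Vf x) (Ef x) (\<lambda>_. 1) (w x)"
begin

abbreviation V :: "nat set" where "V \<equiv> subst_vertices VA Vf"
abbreviation E :: "(nat \<times> nat) set" where "E \<equiv> subst_arcs VA EA Vf Ef"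

lemma base_digraph: "digraph VA EA"
  using robustD(1)[OF base] .

lemma fibre_digraph: "x \<in> VA \<Longrightarrow> digraph (Vf x) (Ef x)"
  using robustD(1)[OF fibres] .

lemma card_subst:
  assumes IV: "I \<subseteq> VA" and T: "\<And>x. x \<in> I \<Longrightarrow> T x \<subseteq> Vf x"
  shows "card (subst_vertices I T) = (\<Sum>x\<in>I. card (T x))"
proof (rule card_subst_vertices)
  show "finite I"
    using IV base_digraph unfolding digraph_def by (blast intro: finite_subset)
  show "finite (T x)" if "x \<in> I" for x
    using fibre_digraph[of x] IV that unfolding digraph_def by (blast intro: finite_subset[OF T[OF that]])
qed

lemma max_stable_subst:
  assumes I: "stable_set VA EA I" "sum w I = k"
    and T: "\<And>x. x \<in> I \<Longrightarrow> stable_set (Vf x) (Ef x) (T x) \<and> card (T x) = w x"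
  shows "stable_set V E (subst_vertices I T) \<and> card (subst_vertices I T) = k"
proof
  show "stable_set V E (subst_vertices I T)"
    using stable_set_subst[OF base_digraph I(1)] T by blast
  have "T x \<subseteq> Vf x" if "x \<in> I" for x
    using T[OF that] by (blast dest: stable_set_subset)
  then have "card (subst_vertices I T) = (\<Sum>x\<in>I. card (T x))"
    by (rule card_subst[OF stable_set_subset[OF I(1)]])
  also have "\<dots> = sum w I"
    using T by (intro sum.cong) simp_all
  finally show "card (subst_vertices I T) = k"
    using I(2) by simp
qed

lemma card_stable_set_le:
  assumes "stable_set V E S"
  shows "card S \<le> k"
  using assms
proof (rule stable_set_subst_decompose)
  fix I T assume S: "S = subst_vertices I T" and I: "stable_set VA EA I"
    and T: "\<And>x. x \<in> I \<Longrightarrow> stable_set (Vf x) (Ef x) (T x)"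
  have "T x \<subseteq> Vf x" if "x \<in> I" for x
    using T[OF that] by (rule stable_set_subset)
  then have "card S = (\<Sum>x\<in>I. card (T x))"
    unfolding S by (rule card_subst[OF stable_set_subset[OF I]])
  also have "\<dots> \<le> sum w I"
    using T stable_set_subset[OF I] robust_unitD(1)[OF fibres] by (intro sum_mono) blast
  also have "\<dots> \<le> k"
    using robustD(2)[OF base I] .
  finally show "card S \<le> k" .
qed

lemma ex_max_stable_set: "\<exists>S. stable_set V E S \<and> card S = k"
proof -
  obtain I where I: "stable_set VA EA I" "sum w I = k"
    using robustD(3)[OF base] by blast
  have "\<forall>x\<in>I. \<exists>T. stable_set (Vf x) (Ef x) T \<and> card T = w x"
    using stable_set_subset[OF I(1)] robust_unitD(2)[OF fibres] by blast
  then obtain T where "\<forall>x\<in>I. stable_set (Vf x) (Ef x) (T x) \<and> card (T x) = w x"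
    by (rule bchoice[elim_format]) blast
  then show ?thesis
    using max_stable_subst[OF I, of T] by blast
qed

definition fibre_part :: "nat set \<Rightarrow> nat \<Rightarrow> nat set" where
  "fibre_part B x = {v. prod_encode (x, v) \<in> B}"

definition hit_fibres :: "nat set \<Rightarrow> nat set" where
  "hit_fibres B = {x\<in>VA. \<forall>T. stable_set (Vf x) (Ef x) T \<and> card T = w x \<longrightarrow> fibre_part B x \<inter> T \<noteq> {}}"

lemma fibre_part_subset:
  assumes "B \<subseteq> V"
  shows "fibre_part B x \<subseteq> Vf x"
proof
  fix v assume "v \<in> fibre_part B x"
  then have "prod_encode (x, v) \<in> V"
    using assms unfolding fibre_part_def by blast
  then show "v \<in> Vf x"
    unfolding mem_subst_vertices by simp
qed

lemma hit_fibres_meets_max_stable: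
  assumes hits: "\<And>S. stable_set V E S \<Longrightarrow> card S = k \<Longrightarrow> B \<inter> S \<noteq> {}"
    and I: "stable_set VA EA I" "sum w I = k"
  shows "hit_fibres B \<inter> I \<noteq> {}"
proof
  assume "hit_fibres B \<inter> I = {}"
  with stable_set_subset[OF I(1)]
  have "\<forall>x\<in>I. \<exists>T. stable_set (Vf x) (Ef x) T \<and> card T = w x \<and> fibre_part B x \<inter> T = {}"
    unfolding hit_fibres_def by blast
  then obtain T where T: "\<forall>x\<in>I. stable_set (Vf x) (Ef x) (T x) \<and> card (T x) = w x \<and>
      fibre_part B x \<inter> T x = {}"
    by (rule bchoice[elim_format]) blast
  have "stable_set V E (subst_vertices I T) \<and> card (subst_vertices I T) = k"
    using T by (intro max_stable_subst[OF I]) blast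
  then obtain u where "u \<in> B" "u \<in> subst_vertices I T"
    using hits by blast
  then have "outer u \<in> I" "inner u \<in> T (outer u)" "inner u \<in> fibre_part B (outer u)"
    unfolding fibre_part_def mem_subst_vertices by simp_all
  then show False
    using T by blast
qed

lemma transversal_antichain:
  assumes B: "B \<subseteq> V" and hits: "\<And>S. stable_set V E S \<Longrightarrow> card S = k \<Longrightarrow> B \<inter> S \<noteq> {}"
  shows "\<exists>A\<subseteq>B. antichain E A \<and> card A = k"
proof -
  obtain I where I: "I \<subseteq> hit_fibres B" "antichain EA I" "sum w I = k"
    using robustD(4)[OF base, of "hit_fibres B"] hit_fibres_meets_max_stable[OF hits]
    unfolding hit_fibres_def by blast
  have IV: "I \<subseteq> VA"
    using I(1) unfolding hit_fibres_def by blast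
  have "\<forall>x\<in>I. \<exists>A\<subseteq>fibre_part B x. antichain (Ef x) A \<and> card A = w x"
  proof
    fix x assume "x \<in> I"
    then have "x \<in> VA" "\<And>T. stable_set (Vf x) (Ef x) T \<Longrightarrow> card T = w x \<Longrightarrow> fibre_part B x \<inter> T \<noteq> {}"
      using I(1) unfolding hit_fibres_def by blast+
    then show "\<exists>A\<subseteq>fibre_part B x. antichain (Ef x) A \<and> card A = w x"
      by (rule robust_unitD(3)[OF fibres fibre_part_subset[OF B]])
  qed
  then obtain A where A: "\<forall>x\<in>I. A x \<subseteq> fibre_part B x \<and> antichain (Ef x) (A x) \<and> card (A x) = w x"
    by (rule bchoice[elim_format]) blast
  have "subst_vertices I A \<subseteq> B"
  proof
    fix u assume "u \<in> subst_vertices I A"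
    then have "inner u \<in> fibre_part B (outer u)"
      using A unfolding mem_subst_vertices by blast
    then show "u \<in> B"
      unfolding fibre_part_def by simp
  qed
  moreover have "antichain E (subst_vertices I A)"
    using A by (intro antichain_subst[OF base_acyclic I(2)]) blast
  moreover have "card (subst_vertices I A) = k"
  proof -
    have "A x \<subseteq> Vf x" if "x \<in> I" for x
      using A that fibre_part_subset[OF B] by blast
    then have "card (subst_vertices I A) = (\<Sum>x\<in>I. card (A x))"
      by (rule card_subst[OF IV])
    also have "\<dots> = sum w I"
      using A by (intro sum.cong) simp_all
    finally show ?thesis
      using I(3) by simp
  qed
  ultimately show ?thesis
    by blast
qed

theorem robust: "robust V E (\<lambda>_. 1) k"
  unfolding robust_def
  using digraph_subst[OF base_digraph fibre_digraph] card_stable_set_le ex_max_stable_set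
    transversal_antichain by simp

end

section \<open>The gadget\<close>

definition gadget_vertices :: "nat \<Rightarrow> nat set" where
  "gadget_vertices b = {..4*b}"

text \<open>For j < b the gadget has heavy vertices 2j and 2b+1+j of weight b - 1, and light vertices
2j+1, the centre 2b and 3b+1+j of weight 1. Each pair u < v is joined by the arc from u to v unless
it is one of the pairs listed in gadget_nonadjacent.\<close>

definition gadget_nonadjacent :: "nat \<Rightarrow> nat \<Rightarrow> nat \<Rightarrow> bool" where
  "gadget_nonadjacent b u v \<longleftrightarrow>
     (odd u \<and> odd v \<and> v < 2*b) \<or> (even u \<and> v = u + 1 \<and> v < 2*b) \<or> (even u \<and> v = 2*b) \<or>
     (u = 2*b \<and> v \<le> 3*b) \<or> (2*b < u \<and> u \<le> 3*b \<and> v = u + b) \<or> 3*b < u"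

definition gadget_arcs :: "nat \<Rightarrow> (nat \<times> nat) set" where
  "gadget_arcs b = {(u, v). u < v \<and> v \<le> 4*b \<and> \<not> gadget_nonadjacent b u v}"

definition heavy :: "nat \<Rightarrow> nat \<Rightarrow> bool" where
  "heavy b v \<longleftrightarrow> (v < 2*b \<and> even v) \<or> (2*b < v \<and> v \<le> 3*b)"

definition gadget_weight :: "nat \<Rightarrow> nat \<Rightarrow> nat" where
  "gadget_weight b v = (if heavy b v then b - 1 else 1)"

definition gadget_max_stable :: "nat \<Rightarrow> nat set set" where
  "gadget_max_stable b =
     {{h, 2*b} | h. heavy b h} \<union> {{h, h+1} | h. h < 2*b \<and> even h} \<union>
     {{h, h+b} | h. 2*b < h \<and> h \<le> 3*b} \<union> {{v. v < 2*b \<and> odd v}, {3*b<..4*b}}"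

lemma gadget_digraph: "digraph (gadget_vertices b) (gadget_arcs b)"
  unfolding digraph_def gadget_vertices_def gadget_arcs_def by auto

lemma gadget_arc_less: "(u, v) \<in> gadget_arcs b \<Longrightarrow> u < v"
  unfolding gadget_arcs_def by simp

lemma gadget_rtrancl_le: "(u, v) \<in> (gadget_arcs b)\<^sup>* \<Longrightarrow> u \<le> v"
  by (induction rule: rtrancl_induct) (auto dest: gadget_arc_less)

lemma gadget_trancl_less: "(u, v) \<in> (gadget_arcs b)\<^sup>+ \<Longrightarrow> u < v"
  by (metis gadget_arc_less gadget_rtrancl_le le_less_trans tranclD2)

lemma acyclic_gadget: "acyclic (gadget_arcs b)"
  unfolding acyclic_def using gadget_trancl_less by blast

lemma gadget_no_arc_from_top: "3*b < u \<Longrightarrow> (u, v) \<notin> gadget_arcs b"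
  unfolding gadget_arcs_def gadget_nonadjacent_def by simp

lemma gadget_stable_setI:
  assumes "S \<subseteq> {..4*b}" "\<And>u v. u \<in> S \<Longrightarrow> v \<in> S \<Longrightarrow> u < v \<Longrightarrow> gadget_nonadjacent b u v"
  shows "stable_set (gadget_vertices b) (gadget_arcs b) S"
  unfolding stable_set_def gadget_vertices_def gadget_arcs_def
  using assms by (auto simp: nat_neq_iff)

lemma gadget_stable_set_nonadjacent:
  assumes "stable_set (gadget_vertices b) (gadget_arcs b) S" "u \<in> S" "v \<in> S" "u < v"
  shows "gadget_nonadjacent b u v"
  using assms unfolding stable_set_def gadget_vertices_def gadget_arcs_def by auto

lemma gadget_weight_light: "(\<And>v. v \<in> S \<Longrightarrow> \<not> heavy b v) \<Longrightarrow> sum (gadget_weight b) S = card S"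
  unfolding gadget_weight_def by simp

lemma card_odd_below: "card {v. v < 2*b \<and> odd v} = b"
proof -
  have "{v. v < 2*b \<and> odd v} = (\<lambda>j. 2*j+1) ` {..<b}"
    by (auto simp: image_iff elim!: oddE)
  then show ?thesis
    by (simp add: card_image inj_on_def)
qed

lemma gadget_light_cases:
  assumes "u \<le> 4*b" "\<not> heavy b u"
  shows "u = 2*b \<or> (u < 2*b \<and> odd u) \<or> 3*b < u"
  using assms unfolding heavy_def by auto

lemma gadget_max_stableI:
  shows "heavy b h \<Longrightarrow> {h, 2*b} \<in> gadget_max_stable b"
    and "h < 2*b \<Longrightarrow> even h \<Longrightarrow> {h, h+1} \<in> gadget_max_stable b"
    and "2*b < h \<Longrightarrow> h \<le> 3*b \<Longrightarrow> {h, h+b} \<in> gadget_max_stable b"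
    and "{v. v < 2*b \<and> odd v} \<in> gadget_max_stable b"
    and "{3*b<..4*b} \<in> gadget_max_stable b"
  unfolding gadget_max_stable_def by blast+

lemma gadget_max_stable_stable_set:
  "M \<in> gadget_max_stable b \<Longrightarrow> stable_set (gadget_vertices b) (gadget_arcs b) M"
  unfolding gadget_max_stable_def
  by (auto intro!: gadget_stable_setI simp: gadget_nonadjacent_def heavy_def)

lemma gadget_max_stable_weight:
  assumes "b \<ge> 1" "M \<in> gadget_max_stable b"
  shows "sum (gadget_weight b) M = b"
proof -
  have "sum (gadget_weight b) {v. v < 2*b \<and> odd v} = b"
    by (subst gadget_weight_light) (auto simp: heavy_def card_odd_below)
  moreover have "sum (gadget_weight b) {3*b<..4*b} = b"
    by (subst gadget_weight_light) (auto simp: heavy_def)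
  ultimately show ?thesis
    using assms unfolding gadget_max_stable_def by (auto simp: gadget_weight_def heavy_def)
qed

lemma gadget_stable_set_even:
  assumes S: "stable_set (gadget_vertices b) (gadget_arcs b) S"
    and h: "h \<in> S" "h < 2*b" "even h"
  shows "S \<subseteq> {h, h+1} \<or> S \<subseteq> {h, 2*b}"
proof -
  have "u \<in> {h, h+1, 2*b}" if u: "u \<in> S" for u
  proof (cases u h rule: linorder_cases)
    case less
    have False
      using gadget_stable_set_nonadjacent[OF S u h(1) less] h(2,3) less
      unfolding gadget_nonadjacent_def by auto
    then show ?thesis ..
  next
    case greater
    then show ?thesis
      using gadget_stable_set_nonadjacent[OF S h(1) u greater] h(2,3)
      unfolding gadget_nonadjacent_def by auto
  qed simp
  moreover have "\<not> (h+1 \<in> S \<and> 2*b \<in> S)"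
  proof
    assume "h+1 \<in> S \<and> 2*b \<in> S"
    moreover have "h+1 < 2*b"
      using h(2,3) by (auto elim!: evenE)
    ultimately show False
      using gadget_stable_set_nonadjacent[OF S, of "h+1" "2*b"] h(3)
      unfolding gadget_nonadjacent_def by auto
  qed
  ultimately show ?thesis
    by blast
qed

lemma gadget_stable_set_middle:
  assumes S: "stable_set (gadget_vertices b) (gadget_arcs b) S"
    and h: "h \<in> S" "2*b < h" "h \<le> 3*b"
  shows "S \<subseteq> {h, 2*b} \<or> S \<subseteq> {h, h+b}"
proof -
  have "u \<in> {h, 2*b, h+b}" if u: "u \<in> S" for u
  proof (cases u h rule: linorder_cases)
    case less
    then show ?thesis
      using gadget_stable_set_nonadjacent[OF S u h(1) less] h(2,3)
      unfolding gadget_nonadjacent_def by auto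
  next
    case greater
    then show ?thesis
      using gadget_stable_set_nonadjacent[OF S h(1) u greater] h(2,3)
      unfolding gadget_nonadjacent_def by auto
  qed simp
  moreover have "\<not> (2*b \<in> S \<and> h+b \<in> S)"
    using gadget_stable_set_nonadjacent[OF S, of "2*b" "h+b"] h(2,3)
    unfolding gadget_nonadjacent_def by auto
  ultimately show ?thesis
    by blast
qed

lemma gadget_stable_set_centre:
  assumes S: "stable_set (gadget_vertices b) (gadget_arcs b) S"
    and light: "\<And>u. u \<in> S \<Longrightarrow> \<not> heavy b u" and "2*b \<in> S"
  shows "S \<subseteq> {2*b}"
proof
  fix u assume u: "u \<in> S"
  have "u \<le> 4*b"
    using S u unfolding stable_set_def gadget_vertices_def by auto
  then consider "u = 2*b" | "u < 2*b" "odd u" | "3*b < u"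
    using gadget_light_cases light[OF u] by blast
  then show "u \<in> {2*b}"
  proof cases
    case 2
    then show ?thesis
      using gadget_stable_set_nonadjacent[OF S u \<open>2*b \<in> S\<close>] unfolding gadget_nonadjacent_def by auto
  next
    case 3
    then show ?thesis
      using gadget_stable_set_nonadjacent[OF S \<open>2*b \<in> S\<close> u] unfolding gadget_nonadjacent_def by auto
  qed simp
qed

lemma gadget_stable_set_light:
  assumes S: "stable_set (gadget_vertices b) (gadget_arcs b) S"
    and light: "\<And>u. u \<in> S \<Longrightarrow> \<not> heavy b u" and "2*b \<notin> S"
  shows "S \<subseteq> {v. v < 2*b \<and> odd v} \<or> S \<subseteq> {3*b<..4*b}"
proof -
  have sub: "S \<subseteq> {v. v < 2*b \<and> odd v} \<union> {3*b<..4*b}"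
  proof
    fix u assume u: "u \<in> S"
    moreover have "u \<le> 4*b"
      using S u unfolding stable_set_def gadget_vertices_def by auto
    ultimately show "u \<in> {v. v < 2*b \<and> odd v} \<union> {3*b<..4*b}"
      using gadget_light_cases[of u b] light[OF u] \<open>2*b \<notin> S\<close> by auto
  qed
  show ?thesis
  proof (cases "\<exists>u\<in>S. u < 2*b")
    case True
    then obtain u where u: "u \<in> S" "u < 2*b"
      by blast
    have "v \<notin> S" if "3*b < v" for v
    proof
      assume "v \<in> S"
      moreover have "u < v"
        using u(2) that by linarith
      ultimately show False
        using gadget_stable_set_nonadjacent[OF S u(1)] u sub that
        unfolding gadget_nonadjacent_def by force
    qed
    then show ?thesis
      using sub by auto
  next
    case False
    then show ?thesis
      using sub by auto
  qed
qed

lemma gadget_stable_set_subset_max: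
  assumes "b \<ge> 1" and S: "stable_set (gadget_vertices b) (gadget_arcs b) S"
  shows "\<exists>M\<in>gadget_max_stable b. S \<subseteq> M"
proof (cases "\<exists>h\<in>S. heavy b h")
  case True
  then obtain h where h: "h \<in> S" "heavy b h"
    by blast
  have "{h, 2*b} \<in> gadget_max_stable b"
    using h(2) by (rule gadget_max_stableI(1))
  moreover consider "h < 2*b" "even h" | "2*b < h" "h \<le> 3*b"
    using h(2) unfolding heavy_def by blast
  then have "S \<subseteq> {h, 2*b} \<or> (\<exists>M\<in>gadget_max_stable b. S \<subseteq> M)"
  proof cases
    case 1
    then show ?thesis
      using gadget_stable_set_even[OF S h(1) 1] gadget_max_stableI(2)[OF 1] by blast
  next
    case 2
    then show ?thesis
      using gadget_stable_set_middle[OF S h(1) 2] gadget_max_stableI(3)[OF 2] by blast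
  qed
  ultimately show ?thesis
    by blast
next
  case no_heavy: False
  show ?thesis
  proof (cases "2*b \<in> S")
    case True
    have "heavy b 0"
      using assms(1) unfolding heavy_def by simp
    moreover have "S \<subseteq> {0, 2*b}"
      using gadget_stable_set_centre[OF S _ True] no_heavy by blast
    ultimately show ?thesis
      using gadget_max_stableI(1)[of b 0] by auto
  next
    case False
    then have "S \<subseteq> {v. v < 2*b \<and> odd v} \<or> S \<subseteq> {3*b<..4*b}"
      using gadget_stable_set_light[OF S] no_heavy by blast
    then show ?thesis
      using gadget_max_stableI(4,5) by blast
  qed
qed

lemma gadget_trancl_first_arc:
  assumes "(u, v) \<in> (gadget_arcs b)\<^sup>+"
  obtains w where "(u, w) \<in> gadget_arcs b" "w \<le> v"
  using tranclD[OF assms] gadget_rtrancl_le by blast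

lemma gadget_antichain_top: "antichain (gadget_arcs b) {3*b<..4*b}"
proof -
  have "(u, v) \<notin> (gadget_arcs b)\<^sup>+" if "3*b < u" for u v
    using that gadget_no_arc_from_top by (blast elim: gadget_trancl_first_arc)
  then show ?thesis
    unfolding antichain_def by simp
qed

lemma gadget_antichain_centre:
  assumes "2*b < h" "h \<le> 3*b"
  shows "antichain (gadget_arcs b) {h, 2*b}"
proof (rule antichain_pair)
  show "(h, 2*b) \<notin> (gadget_arcs b)\<^sup>+"
    using assms gadget_trancl_less by fastforce
  show "(2*b, h) \<notin> (gadget_arcs b)\<^sup>+"
  proof
    assume "(2*b, h) \<in> (gadget_arcs b)\<^sup>+"
    then obtain w where "(2*b, w) \<in> gadget_arcs b" "w \<le> h"
      by (rule gadget_trancl_first_arc)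
    then show False
      using assms unfolding gadget_arcs_def gadget_nonadjacent_def by auto
  qed
qed

lemma gadget_antichain_twins:
  assumes "h < 2*b" "even h"
  shows "antichain (gadget_arcs b) {h, h+1}"
proof (rule antichain_pair)
  show "(h, h+1) \<notin> (gadget_arcs b)\<^sup>+"
  proof
    assume "(h, h+1) \<in> (gadget_arcs b)\<^sup>+"
    then obtain w where "(h, w) \<in> gadget_arcs b" "w \<le> h+1"
      by (rule gadget_trancl_first_arc)
    moreover have "h+1 < 2*b"
      using assms by (auto elim!: evenE)
    ultimately show False
      using assms(2) unfolding gadget_arcs_def gadget_nonadjacent_def by auto
  qed
  show "(h+1, h) \<notin> (gadget_arcs b)\<^sup>+"
    using gadget_trancl_less by fastforce
qed

lemma gadget_transversal_antichain:
  assumes b: "b \<ge> 1" and hits: "\<And>M. M \<in> gadget_max_stable b \<Longrightarrow> Y \<inter> M \<noteq> {}"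
  shows "\<exists>A\<subseteq>Y. antichain (gadget_arcs b) A \<and> sum (gadget_weight b) A = b"
proof -
  have "\<exists>A. A \<in> gadget_max_stable b \<and> A \<subseteq> Y \<and> antichain (gadget_arcs b) A"
  proof (cases "2*b \<in> Y")
    case centre: True
    show ?thesis
    proof (cases "\<exists>h\<in>Y. 2*b < h \<and> h \<le> 3*b")
      case True
      then obtain h where h: "h \<in> Y" "2*b < h" "h \<le> 3*b"
        by blast
      then have "heavy b h"
        unfolding heavy_def by simp
      then show ?thesis
        using gadget_max_stableI(1) gadget_antichain_centre[OF h(2,3)] centre h(1)
        by (intro exI[of _ "{h, 2*b}"]) simp
    next
      case False
      have "v \<in> Y" if "v \<in> {3*b<..4*b}" for v
      proof -
        have h: "2*b < v - b" "v - b \<le> 3*b" "v - b + b = v"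
          using that by auto
        then have "v - b \<notin> Y"
          using False by blast
        then show ?thesis
          using hits[OF gadget_max_stableI(3)[OF h(1,2)]] h(3) by auto
      qed
      then show ?thesis
        using gadget_max_stableI(5) gadget_antichain_top
        by (intro exI[of _ "{3*b<..4*b}"]) (simp add: subset_iff)
    qed
  next
    case False
    obtain v where v: "v \<in> Y" "v < 2*b" "odd v"
      using hits[OF gadget_max_stableI(4)] by blast
    define h where "h = v - 1"
    have h: "h < 2*b" "even h" "v = h+1"
      using v(2,3) unfolding h_def by (auto elim: oddE)
    then have "h \<in> Y"
      using hits[OF gadget_max_stableI(1)[of b h]] False unfolding heavy_def by auto
    then show ?thesis
      using gadget_max_stableI(2)[OF h(1,2)] gadget_antichain_twins[OF h(1,2)] v(1) h(3)
      by (intro exI[of _ "{h, h+1}"]) simp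
  qed
  then obtain A where "A \<in> gadget_max_stable b" "A \<subseteq> Y" "antichain (gadget_arcs b) A"
    by blast
  then show ?thesis
    using gadget_max_stable_weight[OF b] by blast
qed

theorem robust_gadget:
  assumes "b \<ge> 1"
  shows "robust (gadget_vertices b) (gadget_arcs b) (gadget_weight b) b"
  unfolding robust_def
proof (intro conjI allI impI)
  show "digraph (gadget_vertices b) (gadget_arcs b)"
    by (rule gadget_digraph)
next
  fix S assume S: "stable_set (gadget_vertices b) (gadget_arcs b) S"
  obtain M where M: "M \<in> gadget_max_stable b" "S \<subseteq> M"
    using gadget_stable_set_subset_max[OF assms S] by blast
  have "M \<subseteq> {..4*b}"
    using gadget_max_stable_stable_set[OF M(1)] unfolding stable_set_def gadget_vertices_def by blast
  then have "finite M"
    by (rule finite_subset) simp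
  then have "sum (gadget_weight b) S \<le> sum (gadget_weight b) M"
    using M(2) by (rule sum_mono2) simp
  then show "sum (gadget_weight b) S \<le> b"
    using gadget_max_stable_weight[OF assms M(1)] by simp
next
  show "\<exists>S. stable_set (gadget_vertices b) (gadget_arcs b) S \<and> sum (gadget_weight b) S = b"
    using gadget_max_stable_stable_set[OF gadget_max_stableI(5)]
      gadget_max_stable_weight[OF assms gadget_max_stableI(5)] by blast
next
  fix Y assume "\<forall>S. stable_set (gadget_vertices b) (gadget_arcs b) S \<and> sum (gadget_weight b) S = b
      \<longrightarrow> Y \<inter> S \<noteq> {}"
  then have "Y \<inter> M \<noteq> {}" if "M \<in> gadget_max_stable b" for M
    using gadget_max_stable_stable_set[OF that] gadget_max_stable_weight[OF assms that] by blast
  then show "\<exists>A\<subseteq>Y. antichain (gadget_arcs b) A \<and> sum (gadget_weight b) A = b"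
    by (rule gadget_transversal_antichain[OF assms])
qed

section \<open>The construction\<close>

lemma robust_singleton: "robust {v} {} (\<lambda>_. 1) 1"
  unfolding robust_def
proof (intro conjI allI impI)
  show "digraph {v} {}"
    unfolding digraph_def by simp
  have "stable_set {v} {} {v}"
    unfolding stable_set_def by simp
  then show "\<exists>S. stable_set {v} {} S \<and> (\<Sum>_\<in>S. 1::nat) = 1"
    by (intro exI[of _ "{v}"]) simp
  fix S assume "stable_set {v} {} S"
  then have "S \<subseteq> {v}"
    unfolding stable_set_def by blast
  then show "(\<Sum>_\<in>S. 1::nat) \<le> 1"
    using card_mono[of "{v}" S] by simp
next
  fix B assume "\<forall>S. stable_set {v} {} S \<and> (\<Sum>_\<in>S. 1::nat) = 1 \<longrightarrow> B \<inter> S \<noteq> {}"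
  then have "v \<in> B"
    using stable_set_def[of "{v}" "{}" "{v}"] by auto
  then show "\<exists>A\<subseteq>B. antichain {} A \<and> (\<Sum>_\<in>A. 1::nat) = 1"
    by (intro exI[of _ "{v}"]) (simp add: antichain_def)
qed

fun robust_digraph :: "nat \<Rightarrow> nat set \<times> (nat \<times> nat) set" where
  "robust_digraph 0 = ({0}, {})"
| "robust_digraph (Suc n) =
     (let b = n + 2; (V, E) = robust_digraph n;
          Vf = (\<lambda>x. if heavy b x then V else {0}); Ef = (\<lambda>x. if heavy b x then E else {})
      in (subst_vertices (gadget_vertices b) Vf, subst_arcs (gadget_vertices b) (gadget_arcs b) Vf Ef))"

lemma robust_robust_digraph:
  "robust (fst (robust_digraph n)) (snd (robust_digraph n)) (\<lambda>_. 1) (Suc n)"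
proof (induction n)
  case 0
  show ?case
    using robust_singleton by simp
next
  case (Suc n)
  obtain V E where VE: "robust_digraph n = (V, E)"
    by fastforce
  let ?b = "n + 2"
  let ?Vf = "\<lambda>x. if heavy ?b x then V else {0}" and ?Ef = "\<lambda>x. if heavy ?b x then E else {}"
  have "robust_substitution (gadget_vertices ?b) (gadget_arcs ?b) (gadget_weight ?b) ?b ?Vf ?Ef"
  proof
    show "acyclic (gadget_arcs ?b)"
      by (rule acyclic_gadget)
    show "robust (gadget_vertices ?b) (gadget_arcs ?b) (gadget_weight ?b) ?b"
      by (rule robust_gadget) simp
    show "robust (?Vf x) (?Ef x) (\<lambda>_. 1) (gadget_weight ?b x)" for x
      using Suc.IH robust_singleton[of "0::nat"] VE by (simp add: gadget_weight_def)
  qed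
  then have "robust (subst_vertices (gadget_vertices ?b) ?Vf)
      (subst_arcs (gadget_vertices ?b) (gadget_arcs ?b) ?Vf ?Ef) (\<lambda>_. 1) ?b"
    by (rule robust_substitution.robust)
  then show ?case
    using VE by (simp add: Let_def)
qed

theorem theorem1:
  fixes k :: nat
  assumes "k \<ge> 1"
  shows "\<exists>(V :: nat set) E. digraph V E \<and> stability_number V E = k \<and>
    (\<forall>ps. length ps = k - 1 \<and> (\<forall>p\<in>set ps. dipath V E p) \<longrightarrow>
       (let (V', E') = delete_vertices V E (\<Union>p\<in>set ps. set p)
        in stability_number V' E' = k))"
proof -
  obtain V E where VE: "robust_digraph (k - 1) = (V, E)"
    by fastforce
  then have robust: "robust V E (\<lambda>_. 1) k"
    using robust_robust_digraph[of "k - 1"] assms by simp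
  show ?thesis
  proof (intro exI conjI allI impI)
    show "digraph V E"
      using robustD(1)[OF robust] .
    show "stability_number V E = k"
      using robust_stability_number[OF robust] .
    fix ps :: "nat list list"
    assume "length ps = k - 1 \<and> (\<forall>p\<in>set ps. dipath V E p)"
    then show "let (V', E') = delete_vertices V E (\<Union>p\<in>set ps. set p) in stability_number V' E' = k"
      using robust_delete_dipaths[OF robust] assms by (simp add: delete_vertices_def)
  qed
qed

end
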